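(* In the setting described in the context, assume $q$ is a square and let $v\ge1$ be an integer such that $d=v(q+\sqrt q+1)$ divides $q^2+q+1$, and let $t=(q^2+q+1)/d$. Then $t=\frac{q-\sqrt q+1}{v}$, $w_0=\sqrt q+v$, and $w_1=\dots=w_{t-1}=v$.
   Context: Let $q=p^h$ with $p$ prime, $h\ge1$. Let $\alpha$ be a primitive element of $\mathbb{F}_{q^3}$; the points of $PG(2,q)$ are the 1-dimensional $\mathbb{F}_q$-subspaces of $\mathbb{F}_{q^3}$, and $P_i$ denotes the point represented by $\alpha^i$, so $PG(2,q)=\{P_0,\dots,P_{q^2+q}\}$. Let $\tau:P_i\mapsto P_{ip\bmod(q^2+q+1)}$ (a collineation) and let $\ell_0$ be a line of $PG(2,q)$ fixed by $\tau$. For a positive divisor $t$ of $q^2+q+1$ and $i=0,\dots,t-1$ let $O_i=\{P_u:u\equiv i\pmod t\}$, and for $u=0,\dots,t-1$ let $w_u=|\ell_0\cap O_u|$. *)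

theory Defs
  imports Complex_Main "HOL-Computational_Algebra.Primes"
begin

definition subfield_q :: "nat \<Rightarrow> 'a::field set" where
  "subfield_q q = {x. x ^ q = x}"

definition Fq_subspace :: "nat \<Rightarrow> 'a::field set \<Rightarrow> bool" where
  "Fq_subspace q W \<longleftrightarrow> 0 \<in> W \<and> (\<forall>x\<in>W. \<forall>y\<in>W. x + y \<in> W)
      \<and> (\<forall>c\<in>subfield_q q. \<forall>x\<in>W. c * x \<in> W)"

definition primitive_elem :: "'a::field \<Rightarrow> bool" where
  "primitive_elem \<alpha> \<longleftrightarrow> \<alpha> \<noteq> 0 \<and> (\<forall>x. x \<noteq> 0 \<longrightarrow> (\<exists>i::nat. x = \<alpha> ^ i))"

text \<open>Points of PG(2,q) are identified with indices i < q^2+q+1 (P_i spanned by alpha^i).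
  A line is the set of points contained in a 2-dimensional F_q-subspace W
  (i.e. an F_q-subspace with q^2 elements); P_u lies on it iff alpha^u \<in> W.\<close>
definition pg_line :: "nat \<Rightarrow> 'a::field \<Rightarrow> nat set \<Rightarrow> bool" where
  "pg_line q \<alpha> L \<longleftrightarrow> (\<exists>W. Fq_subspace q W \<and> card W = q ^ 2 \<and>
      L = {u. u < q^2 + q + 1 \<and> \<alpha> ^ u \<in> W})"

definition tau_map :: "nat \<Rightarrow> nat \<Rightarrow> nat \<Rightarrow> nat" where
  "tau_map p q u = (u * p) mod (q^2 + q + 1)"

definition orbit_class :: "nat \<Rightarrow> nat \<Rightarrow> nat \<Rightarrow> nat set" where
  "orbit_class q t i = {u. u < q^2 + q + 1 \<and> u mod t = i}"

definition wcount :: "nat \<Rightarrow> nat \<Rightarrow> nat set \<Rightarrow> nat \<Rightarrow> nat" where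
  "wcount q t L u = card (L \<inter> orbit_class q t u)"

end

(*
  Write q = s^2, so that F_{q^3} = F_{s^6} contains E = F_{s^3}.  The F_s-spaces alpha^i E
  (i < m = q - s + 1) have s^3 elements each, and their points are exactly the P_u with
  u = i (mod m): these are the Baer subplanes of the Singer orbit.  A line is an F_s-space W
  with s^4 elements; since 4 + 3 > 6 it meets alpha^i E in an F_s-space of dimension 1 or 2,
  so the line meets the i-th Baer subplane in c_i = 1 or s + 1 points.  Counting the q + 1
  points of the line, c_0 + ... + c_{m-1} = q + 1 = m + s, so exactly one c_i equals s + 1.
  The collineation tau fixes the line and maps the i-th Baer subplane to the (ip mod m)-th,
  so that exceptional i satisfies ip = i (mod m); as m = 1 (mod p - 1) it is i = 0.
  Finally w_u is the sum of the v numbers c_i with i = u (mod t).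
*)

theory Submission
  imports Defs "HOL-Number_Theory.Number_Theory"
begin

section \<open>Subspaces over a subfield\<close>

definition is_subfield :: "'a::field set \<Rightarrow> bool" where
  "is_subfield K \<longleftrightarrow> 0 \<in> K \<and> 1 \<in> K \<and> (\<forall>a\<in>K. \<forall>b\<in>K. a + b \<in> K \<and> a - b \<in> K \<and> a * b \<in> K)
     \<and> (\<forall>a\<in>K. inverse a \<in> K)"

definition subspace_over :: "'a::field set \<Rightarrow> 'a set \<Rightarrow> bool" where
  "subspace_over K S \<longleftrightarrow> 0 \<in> S \<and> (\<forall>x\<in>S. \<forall>y\<in>S. x + y \<in> S) \<and> (\<forall>c\<in>K. \<forall>x\<in>S. c * x \<in> S)"

lemma Fq_subspace_iff_subspace_over: "Fq_subspace q W \<longleftrightarrow> subspace_over (subfield_q q) W"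
  unfolding Fq_subspace_def subspace_over_def ..

lemma subspace_over_diff:
  assumes "is_subfield K" "subspace_over K S" "x \<in> S" "y \<in> S"
  shows "x - y \<in> S"
proof -
  have "- 1 \<in> K" using assms(1) unfolding is_subfield_def by (metis diff_0)
  then have "x + (- 1) * y \<in> S" using assms(2-4) unfolding subspace_over_def by blast
  then show ?thesis by simp
qed

lemma subspace_over_Int:
  "subspace_over K S \<Longrightarrow> subspace_over K T \<Longrightarrow> subspace_over K (S \<inter> T)"
  unfolding subspace_over_def by blast

lemma subspace_over_subset:
  "K' \<subseteq> K \<Longrightarrow> subspace_over K S \<Longrightarrow> subspace_over K' S"
  unfolding subspace_over_def by blast

lemma subspace_over_adjoin:
  assumes K: "is_subfield K" and T: "subspace_over K T"
  shows "subspace_over K ((\<lambda>(t, c). t + c * y) ` (T \<times> K))"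
  unfolding subspace_over_def
proof (intro conjI ballI)
  show "0 \<in> (\<lambda>(t, c). t + c * y) ` (T \<times> K)"
    using K T unfolding is_subfield_def subspace_over_def by (intro image_eqI[of _ _ "(0, 0)"]) auto
next
  fix x z assume "x \<in> (\<lambda>(t, c). t + c * y) ` (T \<times> K)" "z \<in> (\<lambda>(t, c). t + c * y) ` (T \<times> K)"
  then obtain t1 c1 t2 c2 where "t1 \<in> T" "c1 \<in> K" "t2 \<in> T" "c2 \<in> K" "x = t1 + c1 * y" "z = t2 + c2 * y"
    by auto
  with K T show "x + z \<in> (\<lambda>(t, c). t + c * y) ` (T \<times> K)"
    unfolding is_subfield_def subspace_over_def
    by (intro image_eqI[of _ _ "(t1 + t2, c1 + c2)"]) (auto simp: algebra_simps)
next
  fix c x assume "c \<in> K" "x \<in> (\<lambda>(t, c). t + c * y) ` (T \<times> K)"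
  then obtain t1 c1 where "t1 \<in> T" "c1 \<in> K" "x = t1 + c1 * y" by auto
  with \<open>c \<in> K\<close> K T show "c * x \<in> (\<lambda>(t, c). t + c * y) ` (T \<times> K)"
    unfolding is_subfield_def subspace_over_def
    by (intro image_eqI[of _ _ "(c * t1, c * c1)"]) (auto simp: algebra_simps)
qed

lemma inj_on_adjoin:
  assumes K: "is_subfield K" and T: "subspace_over K T" and "y \<notin> T"
  shows "inj_on (\<lambda>(t, c). t + c * y) (T \<times> K)"
proof (rule inj_onI, clarsimp)
  fix t1 c1 t2 c2 assume h: "t1 \<in> T" "c1 \<in> K" "t2 \<in> T" "c2 \<in> K" "t1 + c1 * y = t2 + c2 * y"
  show "t1 = t2 \<and> c1 = c2"
  proof (rule ccontr)
    assume "\<not> (t1 = t2 \<and> c1 = c2)"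
    with h(5) have "c1 \<noteq> c2" by auto
    with h(5) have "y = inverse (c1 - c2) * (t2 - t1)" by (simp add: field_simps)
    moreover have "inverse (c1 - c2) \<in> K" using K h(2,4) unfolding is_subfield_def by blast
    ultimately have "y \<in> T"
      using T subspace_over_diff[OF K T h(3,1)] unfolding subspace_over_def by simp
    with \<open>y \<notin> T\<close> show False by simp
  qed
qed

lemma subspace_over_extend:
  assumes K: "is_subfield K" and T: "subspace_over K T" and S: "subspace_over K S"
    and "T \<subseteq> S" "y \<in> S" "y \<notin> T"
  shows "\<exists>T'. subspace_over K T' \<and> T \<subset> T' \<and> T' \<subseteq> S \<and> card T' = card T * card K"
proof -
  define T' where "T' = (\<lambda>(t, c). t + c * y) ` (T \<times> K)"
  have "card T' = card T * card K"
    unfolding T'_def using inj_on_adjoin[OF K T \<open>y \<notin> T\<close>] by (simp add: card_image card_cartesian_product)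
  moreover have "T \<subset> T'"
  proof -
    have "x \<in> T'" if "x \<in> T" for x
      unfolding T'_def using that K by (intro image_eqI[of _ _ "(x, 0)"]) (auto simp: is_subfield_def)
    moreover have "y \<in> T'"
      unfolding T'_def using K T by (intro image_eqI[of _ _ "(0, 1)"]) (auto simp: is_subfield_def subspace_over_def)
    ultimately show ?thesis using \<open>y \<notin> T\<close> by blast
  qed
  moreover have "T' \<subseteq> S"
  proof
    fix x assume "x \<in> T'"
    then obtain t c where "t \<in> T" "c \<in> K" "x = t + c * y" unfolding T'_def by auto
    then show "x \<in> S" using S \<open>T \<subseteq> S\<close> \<open>y \<in> S\<close> unfolding subspace_over_def by blast
  qed
  ultimately show ?thesis using subspace_over_adjoin[OF K T] unfolding T'_def by blast
qed

lemma card_subspace_over: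
  assumes K: "is_subfield K" and S: "subspace_over K S" and "finite S"
  shows "\<exists>j. card S = card K ^ j"
proof -
  have grow: "\<exists>j. card S = card K ^ j"
    if "subspace_over K T" "T \<subseteq> S" "card T = card K ^ i" "card S - card T = n" for T i n
    using that
  proof (induction n arbitrary: T i rule: less_induct)
    case (less n T i)
    show ?case
    proof (cases "T = S")
      case True
      with less.prems show ?thesis by blast
    next
      case False
      with less.prems(2) obtain y where y: "y \<in> S" "y \<notin> T" by blast
      obtain T' where T': "subspace_over K T'" "T \<subset> T'" "T' \<subseteq> S" "card T' = card T * card K"
        using subspace_over_extend[OF K less.prems(1) S less.prems(2) y] by blast
      have "finite T'" using T'(3) \<open>finite S\<close> by (rule finite_subset)
      then have "card T < card T'" using T'(2) by (rule psubset_card_mono)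
      moreover have "card T' \<le> card S" using T'(3) \<open>finite S\<close> by (rule card_mono[rotated])
      ultimately have "card S - card T' < n" using less.prems(4) by linarith
      moreover have "card T' = card K ^ Suc i" using T'(4) less.prems(3) by simp
      ultimately show ?thesis using less.IH[OF _ T'(1,3)] by blast
    qed
  qed
  have "subspace_over K {0}" unfolding subspace_over_def by simp
  moreover have "{0} \<subseteq> S" using S unfolding subspace_over_def by simp
  moreover have "card {0::'a} = card K ^ 0" by simp
  ultimately show ?thesis using grow by blast
qed

lemma card_mult_card_le_if_Int_eq_zero:
  fixes A B :: "'a::{ab_group_add,finite} set"
  assumes "\<forall>x\<in>A. \<forall>y\<in>A. x - y \<in> A" "\<forall>x\<in>B. \<forall>y\<in>B. x - y \<in> B" "A \<inter> B = {0}"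
  shows "card A * card B \<le> card (UNIV :: 'a set)"
proof -
  have "inj_on (\<lambda>(a, b). a + b) (A \<times> B)"
  proof (rule inj_onI, clarsimp)
    fix a b a' b' assume h: "a \<in> A" "b \<in> B" "a' \<in> A" "b' \<in> B" "a + b = a' + b'"
    then have "a - a' = b' - b" by (simp add: algebra_simps)
    moreover have "a - a' \<in> A" "b' - b \<in> B" using assms(1,2) h(1-4) by auto
    ultimately have "a - a' \<in> A \<inter> B" by simp
    then have "a = a'" using assms(3) by simp
    with h(5) show "a = a' \<and> b = b'" by simp
  qed
  then have "card A * card B = card ((\<lambda>(a, b). a + b) ` (A \<times> B))"
    by (simp add: card_image card_cartesian_product)
  also have "\<dots> \<le> card (UNIV :: 'a set)" by (rule card_mono) auto
  finally show ?thesis .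
qed

lemma card_eq_mult_card_image:
  assumes "finite A" "\<And>x. x \<in> A \<Longrightarrow> card {y \<in> A. f y = f x} = k"
  shows "card A = k * card (f ` A)"
proof -
  have "card A = (\<Sum>u\<in>f ` A. card {y \<in> A. f y = u})"
    using sum.image_gen[OF assms(1), of "\<lambda>_. 1 :: nat" f] by simp
  also have "\<dots> = (\<Sum>u\<in>f ` A. k)" using assms(2) by (intro sum.cong) auto
  finally show ?thesis by simp
qed

lemma card_residue_class:
  fixes u t v :: nat
  assumes "u < t"
  shows "card {i. i < v * t \<and> i mod t = u} = v"
proof -
  have "{i. i < v * t \<and> i mod t = u} = (\<lambda>j. j * t + u) ` {..<v}"
  proof (intro equalityI subsetI)
    fix i assume "i \<in> {i. i < v * t \<and> i mod t = u}"
    then show "i \<in> (\<lambda>j. j * t + u) ` {..<v}"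
      by (intro image_eqI[of _ _ "i div t"]) (auto simp: less_mult_imp_div_less)
  next
    fix i assume "i \<in> (\<lambda>j. j * t + u) ` {..<v}"
    then obtain j where "j < v" "i = j * t + u" by blast
    moreover have "j * t + u < (j + 1) * t" using assms by simp
    moreover have "(j + 1) * t \<le> v * t" using \<open>j < v\<close> by (intro mult_right_mono) auto
    ultimately show "i \<in> {i. i < v * t \<and> i mod t = u}" using assms by simp
  qed
  moreover have "inj_on (\<lambda>j. j * t + u) {..<v}" using assms by (auto simp: inj_on_def)
  ultimately show ?thesis by (simp add: card_image)
qed

lemma wcount_eq_sum_wcount:
  assumes "0 < k" "t dvd k"
  shows "wcount q t L u = (\<Sum>i \<in> {i. i < k \<and> i mod t = u}. wcount q k L i)"
proof -
  have "L \<inter> orbit_class q t u = (\<Union>i \<in> {i. i < k \<and> i mod t = u}. L \<inter> orbit_class q k i)"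
  proof (intro equalityI subsetI)
    fix x assume "x \<in> L \<inter> orbit_class q t u"
    moreover have "x mod k < k" using assms(1) by simp
    moreover have "x mod k mod t = x mod t" using assms(2) by (rule mod_mod_cancel)
    ultimately show "x \<in> (\<Union>i \<in> {i. i < k \<and> i mod t = u}. L \<inter> orbit_class q k i)"
      unfolding orbit_class_def by auto
  qed (use assms(2) in \<open>auto simp: orbit_class_def mod_mod_cancel\<close>)
  moreover have "card (\<Union>i \<in> {i. i < k \<and> i mod t = u}. L \<inter> orbit_class q k i)
      = (\<Sum>i \<in> {i. i < k \<and> i mod t = u}. card (L \<inter> orbit_class q k i))"
    by (rule card_UN_disjoint) (auto simp: orbit_class_def)
  ultimately show ?thesis unfolding wcount_def by simp
qed

section \<open>Fixed fields of powers of the Frobenius\<close>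

lemma subfield_q_is_subfield:
  fixes d :: nat
  assumes "d = CHAR('a::{field,finite}) ^ k"
  shows "is_subfield (subfield_q d :: 'a set)"
proof -
  have "prime CHAR('a)" by (rule prime_CHAR_semidom) (simp add: finite_imp_CHAR_pos)
  then have add: "(x + y :: 'a) ^ d = x ^ d + y ^ d" for x y
    using freshmans_dream' assms by blast
  have diff: "(x - y :: 'a) ^ d = x ^ d - y ^ d" for x y
    using add[of "x - y" y] by (simp add: algebra_simps)
  have "d > 0" using assms \<open>prime CHAR('a)\<close> by (simp add: prime_gt_0_nat)
  then show ?thesis
    unfolding is_subfield_def subfield_q_def
    by (auto simp: add diff power_mult_distrib power_inverse)
qed

lemma subfield_q_power_closed:
  assumes "x \<in> subfield_q d"
  shows "x ^ k \<in> subfield_q d"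
proof -
  have "(x ^ k) ^ d = (x ^ d) ^ k" by (simp only: power_mult[symmetric] mult.commute)
  with assms show ?thesis unfolding subfield_q_def by simp
qed

lemma subfield_q_subset_power: "subfield_q d \<subseteq> subfield_q (d ^ k)"
proof
  fix x :: 'a assume x: "x \<in> subfield_q d"
  show "x \<in> subfield_q (d ^ k)"
  proof (induction k)
    case (Suc k)
    have "x ^ d ^ Suc k = (x ^ d ^ k) ^ d" by (simp only: power_Suc2 power_mult)
    with Suc x show ?case unfolding subfield_q_def by simp
  qed (simp add: subfield_q_def)
qed

lemma subfield_q_square_Int_cube: "subfield_q (d ^ 2) \<inter> subfield_q (d ^ 3) \<subseteq> subfield_q d"
proof
  fix x :: 'a assume "x \<in> subfield_q (d ^ 2) \<inter> subfield_q (d ^ 3)"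
  then have sq: "x ^ d ^ 2 = x" and cube: "x ^ d ^ 3 = x" unfolding subfield_q_def by auto
  have "d ^ 3 = d ^ 2 * d" by (simp add: power2_eq_square power3_eq_cube)
  then have "x ^ d = x ^ d ^ 3" by (simp only: sq power_mult)
  with cube show "x \<in> subfield_q d" unfolding subfield_q_def by simp
qed

section \<open>Powers of a primitive element\<close>

locale primitive_field =
  fixes \<alpha> :: "'a::{field,finite}"
  assumes primitive: "primitive_elem \<alpha>"
begin

definition ord_alpha :: nat where "ord_alpha = card (UNIV :: 'a set) - 1"

lemma alpha_nonzero: "\<alpha> \<noteq> 0"
  using primitive unfolding primitive_elem_def by simp

lemma ord_alpha_pos: "ord_alpha > 0"
proof -
  have "{0, 1::'a} \<subseteq> UNIV" by simp
  then have "card {0, 1::'a} \<le> card (UNIV :: 'a set)" by (rule card_mono[rotated]) simp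
  then show ?thesis unfolding ord_alpha_def by simp
qed

lemma power_ord_alpha: "(x :: 'a) \<noteq> 0 \<Longrightarrow> x ^ ord_alpha = 1"
proof -
  assume x: "x \<noteq> 0"
  let ?U = "UNIV - {0 :: 'a}"
  have "(\<Prod>y\<in>?U. x * y) = x ^ card ?U * \<Prod>?U" by (simp add: prod.distrib)
  moreover have "(\<Prod>y\<in>?U. x * y) = \<Prod>?U"
    by (rule prod.reindex_bij_witness[of _ "\<lambda>y. y / x" "\<lambda>y. x * y"]) (use x in auto)
  moreover have "\<Prod>?U \<noteq> 0" by simp
  moreover have "card ?U = ord_alpha" unfolding ord_alpha_def by (simp add: card_Diff_singleton)
  ultimately show ?thesis by simp
qed

lemma alpha_power_mod: "\<alpha> ^ (i mod ord_alpha) = \<alpha> ^ i"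
proof -
  have "\<alpha> ^ i = \<alpha> ^ (ord_alpha * (i div ord_alpha) + i mod ord_alpha)"
    by (simp only: mult_div_mod_eq)
  also have "\<dots> = (\<alpha> ^ ord_alpha) ^ (i div ord_alpha) * \<alpha> ^ (i mod ord_alpha)"
    by (simp only: power_add power_mult)
  finally show ?thesis using power_ord_alpha[OF alpha_nonzero] by simp
qed

lemma ex_alpha_power: "x \<noteq> 0 \<Longrightarrow> \<exists>i < ord_alpha. x = \<alpha> ^ i"
proof -
  assume "x \<noteq> 0"
  then obtain i where "x = \<alpha> ^ i" using primitive unfolding primitive_elem_def by blast
  then show ?thesis using alpha_power_mod ord_alpha_pos by (intro exI[of _ "i mod ord_alpha"]) auto
qed

lemma inj_on_alpha_power: "inj_on (\<lambda>i. \<alpha> ^ i) {..<ord_alpha}"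
proof (rule eq_card_imp_inj_on)
  have "(\<lambda>i. \<alpha> ^ i) ` {..<ord_alpha} = UNIV - {0}"
    using ex_alpha_power alpha_nonzero by fastforce
  then show "card ((\<lambda>i. \<alpha> ^ i) ` {..<ord_alpha}) = card {..<ord_alpha}"
    unfolding ord_alpha_def by (simp add: card_Diff_singleton)
qed simp

lemma alpha_power_eq_iff: "\<alpha> ^ i = \<alpha> ^ j \<longleftrightarrow> i mod ord_alpha = j mod ord_alpha"
proof
  assume "\<alpha> ^ i = \<alpha> ^ j"
  then have "\<alpha> ^ (i mod ord_alpha) = \<alpha> ^ (j mod ord_alpha)" by (simp only: alpha_power_mod)
  then show "i mod ord_alpha = j mod ord_alpha"
    using inj_on_alpha_power ord_alpha_pos by (auto simp: inj_on_def)
qed (metis alpha_power_mod)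

definition dlog :: "'a \<Rightarrow> nat" where "dlog x = (SOME i. i < ord_alpha \<and> x = \<alpha> ^ i)"

lemma dlog_spec: "x \<noteq> 0 \<Longrightarrow> dlog x < ord_alpha \<and> x = \<alpha> ^ dlog x"
  unfolding dlog_def by (rule someI_ex) (rule ex_alpha_power)

lemma dlog_alpha_power: "dlog (\<alpha> ^ i) = i mod ord_alpha"
proof -
  have "dlog (\<alpha> ^ i) < ord_alpha" "\<alpha> ^ i = \<alpha> ^ dlog (\<alpha> ^ i)"
    using dlog_spec[of "\<alpha> ^ i"] alpha_nonzero by auto
  then show ?thesis using alpha_power_eq_iff by (metis mod_less)
qed

lemma alpha_power_mem_subfield_q_iff:
  assumes "ord_alpha = g * (d - 1)" "d \<ge> 2"
  shows "\<alpha> ^ i \<in> subfield_q d \<longleftrightarrow> g dvd i"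
proof -
  have "\<alpha> ^ i \<in> subfield_q d \<longleftrightarrow> \<alpha> ^ (i * d) = \<alpha> ^ i"
    unfolding subfield_q_def by (simp add: power_mult)
  also have "\<dots> \<longleftrightarrow> ord_alpha dvd i * d - i"
    unfolding alpha_power_eq_iff using assms(2) by (intro mod_eq_dvd_iff_nat) simp
  also have "i * d - i = i * (d - 1)" by (simp add: diff_mult_distrib2)
  also have "ord_alpha dvd i * (d - 1) \<longleftrightarrow> g dvd i" using assms by simp
  finally show ?thesis .
qed

lemma card_subfield_q:
  assumes "ord_alpha = g * (d - 1)" "d \<ge> 2"
  shows "card (subfield_q d :: 'a set) = d"
proof -
  let ?I = "{i. i < ord_alpha \<and> g dvd i}"
  have "subfield_q d = insert 0 ((\<lambda>i. \<alpha> ^ i) ` ?I)"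
  proof (intro equalityI subsetI)
    fix x :: 'a assume x: "x \<in> subfield_q d"
    show "x \<in> insert 0 ((\<lambda>i. \<alpha> ^ i) ` ?I)"
    proof (cases "x = 0")
      case False
      then obtain i where "i < ord_alpha" "x = \<alpha> ^ i" using ex_alpha_power by blast
      with x show ?thesis using alpha_power_mem_subfield_q_iff[OF assms] by auto
    qed simp
  qed (use assms alpha_power_mem_subfield_q_iff[OF assms] in \<open>auto simp: subfield_q_def\<close>)
  moreover have "inj_on (\<lambda>i. \<alpha> ^ i) ?I" using inj_on_alpha_power by (rule inj_on_subset) auto
  moreover have "0 \<notin> (\<lambda>i. \<alpha> ^ i) ` ?I" using alpha_nonzero by auto
  moreover have "?I = (\<lambda>j. g * j) ` {..<d - 1}"
    using assms(1) ord_alpha_pos by (auto elim!: dvdE)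
  moreover have "inj_on (\<lambda>j. g * j) {..<d - 1}"
    using assms(1) ord_alpha_pos by (auto simp: inj_on_def)
  ultimately show ?thesis using assms(2) by (simp add: card_image)
qed

end

section \<open>The Singer model of PG(2,q) for square q\<close>

lemma square_order_identities:
  fixes s :: nat
  assumes "s \<ge> 1"
  shows "(s^2)^2 + s^2 + 1 = (s^2 - s + 1) * (s^2 + s + 1)"
    and "s^3 + 1 = (s + 1) * (s^2 - s + 1)"
    and "s^3 - 1 = (s - 1) * (s^2 + s + 1)"
    and "s^2 - 1 = (s - 1) * (s + 1)"
    and "(s^2 - s + 1) + s = s^2 + 1"
proof -
  obtain r where "s = Suc r" using assms by (cases s) auto
  then show "(s^2)^2 + s^2 + 1 = (s^2 - s + 1) * (s^2 + s + 1)"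
    and "s^3 + 1 = (s + 1) * (s^2 - s + 1)"
    and "s^3 - 1 = (s - 1) * (s^2 + s + 1)"
    and "s^2 - 1 = (s - 1) * (s + 1)"
    and "(s^2 - s + 1) + s = s^2 + 1"
    by (simp_all add: power2_eq_square power3_eq_cube algebra_simps)
qed

lemma cube_minus_one_factor: "(q::nat)^3 - 1 = (q^2 + q + 1) * (q - 1)"
  by (cases q) (simp_all add: power2_eq_square power3_eq_cube algebra_simps)

locale singer_square = primitive_field +
  fixes p h s q :: nat
  assumes prime_p: "prime p" and h_pos: "h \<ge> 1" and q_eq: "q = p ^ h"
    and card_field: "card (UNIV :: 'a set) = q ^ 3" and q_square: "q = s ^ 2"
begin

text \<open>The N points of PG(2,q) fall into m Baer subplanes of M points each.\<close>

definition N :: nat where "N = q^2 + q + 1"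
definition m :: nat where "m = q - s + 1"
definition M :: nat where "M = q + s + 1"

lemma q_ge_2: "q \<ge> 2"
proof -
  have "p ^ 1 \<le> p ^ h" using h_pos prime_gt_1_nat[OF prime_p] by (intro power_increasing) auto
  then show ?thesis using q_eq prime_ge_2_nat[OF prime_p] by simp
qed

lemma s_ge_2: "s \<ge> 2"
proof -
  have "s^2 \<le> 1^2" if "s \<le> 1" using that by (rule power_mono) simp
  then show ?thesis using q_ge_2 q_square by fastforce
qed

lemma
  shows N_eq: "N = m * M"
    and s_cube_plus_one: "s^3 + 1 = (s + 1) * m"
    and s_cube_minus_one: "s^3 - 1 = (s - 1) * M"
    and q_minus_one: "q - 1 = (s - 1) * (s + 1)"
    and m_plus_s: "m + s = q + 1"
  unfolding N_def m_def M_def unfolding q_square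
  using square_order_identities[OF order.trans[OF one_le_numeral s_ge_2]] by (simp_all only:)

lemma ord_alpha_eq: "ord_alpha = N * (q - 1)"
  unfolding ord_alpha_def card_field N_def by (rule cube_minus_one_factor)

lemma ord_alpha_eq_cubes: "ord_alpha = (s^3 + 1) * (s^3 - 1)"
proof -
  have "ord_alpha = (s^3)^2 - 1"
    unfolding ord_alpha_def card_field q_square by (simp flip: power_mult)
  also have "\<dots> = (s^3 + 1) * (s^3 - 1)" by (simp add: power2_eq_square algebra_simps)
  finally show ?thesis .
qed

lemma m_pos: "m > 0" unfolding m_def by simp

lemma N_pos: "N > 0" unfolding N_def by simp

lemma CHAR_eq: "CHAR('a) = p"
proof -
  have "prime CHAR('a)" by (rule prime_CHAR_semidom) (simp add: finite_imp_CHAR_pos)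
  moreover have "CHAR('a) dvd p ^ (h * 3)"
    using CHAR_dvd_CARD[where 'a='a] card_field q_eq by (simp add: power_mult)
  ultimately have "CHAR('a) dvd p" using prime_dvd_power by blast
  with \<open>prime CHAR('a)\<close> show ?thesis using prime_p by (simp add: primes_dvd_imp_eq)
qed

lemma s_prime_power: "\<exists>k. s = CHAR('a) ^ k"
proof -
  have "s dvd p ^ h" using q_square q_eq by (simp add: power2_eq_square)
  then show ?thesis using divides_primepow_nat[OF prime_p] CHAR_eq by auto
qed

abbreviation Fq :: "'a set" where "Fq \<equiv> subfield_q q"
abbreviation Fs :: "'a set" where "Fs \<equiv> subfield_q s"
abbreviation E :: "'a set" where "E \<equiv> subfield_q (s^3)"

lemma is_subfield_Fs: "is_subfield Fs"
  using s_prime_power subfield_q_is_subfield by blast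

lemma is_subfield_Fq: "is_subfield Fq"
proof -
  obtain k where "s = CHAR('a) ^ k" using s_prime_power by blast
  then have "q = CHAR('a) ^ (k * 2)" using q_square by (simp add: power_mult)
  then show ?thesis by (rule subfield_q_is_subfield)
qed

lemma is_subfield_E: "is_subfield E"
proof -
  obtain k where "s = CHAR('a) ^ k" using s_prime_power by blast
  then have "s^3 = CHAR('a) ^ (k * 3)" by (simp add: power_mult)
  then show ?thesis by (rule subfield_q_is_subfield)
qed

lemma Fs_subset_Fq: "Fs \<subseteq> Fq"
  using subfield_q_subset_power[of s 2] q_square by simp

lemma Fs_subset_E: "Fs \<subseteq> E"
  by (rule subfield_q_subset_power)

lemma Fq_Int_E: "Fq \<inter> E \<subseteq> Fs"
  using subfield_q_square_Int_cube q_square by simp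

lemma alpha_power_mem_Fq_iff: "\<alpha> ^ i \<in> Fq \<longleftrightarrow> N dvd i"
  using alpha_power_mem_subfield_q_iff[OF ord_alpha_eq q_ge_2] .

lemma alpha_power_mem_E_iff: "\<alpha> ^ i \<in> E \<longleftrightarrow> (s^3 + 1) dvd i"
proof -
  have "s^3 \<ge> 2^3" using s_ge_2 by (rule power_mono) simp
  then show ?thesis using alpha_power_mem_subfield_q_iff[OF ord_alpha_eq_cubes] by simp
qed

lemma card_Fq: "card Fq = q"
  using card_subfield_q[OF ord_alpha_eq q_ge_2] .

lemma card_E: "card E = s^3"
proof -
  have "s^3 \<ge> 2^3" using s_ge_2 by (rule power_mono) simp
  then show ?thesis using card_subfield_q[OF ord_alpha_eq_cubes] by simp
qed

lemma card_Fs: "card Fs = s"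
proof -
  have "ord_alpha = (s^3 + 1) * M * (s - 1)" unfolding ord_alpha_eq_cubes s_cube_minus_one by (simp only: mult_ac)
  then show ?thesis using card_subfield_q s_ge_2 by blast
qed

lemma N_dvd_ord_alpha: "N dvd ord_alpha"
  unfolding ord_alpha_eq by simp

text \<open>For x \<noteq> 0, point x is the index u < N of the point P_u containing x.\<close>

definition point :: "'a \<Rightarrow> nat" where "point x = dlog x mod N"

lemma point_less: "point x < N"
  unfolding point_def using N_pos by simp

lemma point_alpha_power: "point (\<alpha> ^ i) = i mod N"
  unfolding point_def dlog_alpha_power using N_dvd_ord_alpha by (simp add: mod_mod_cancel)

lemma point_eq_iff:
  assumes "x \<noteq> 0" "y \<noteq> 0"
  shows "point y = point x \<longleftrightarrow> (\<exists>c \<in> Fq - {0}. y = c * x)"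
proof -
  obtain k where k: "y / x = \<alpha> ^ k" using ex_alpha_power assms by (metis divide_eq_0_iff)
  have x: "x = \<alpha> ^ dlog x" using dlog_spec assms(1) by blast
  have "y = \<alpha> ^ (k + dlog x)" using k assms(1) x by (simp add: power_add field_simps)
  then have "point y = point x \<longleftrightarrow> (k + dlog x) mod N = dlog x mod N"
    using point_alpha_power x by metis
  also have "\<dots> \<longleftrightarrow> N dvd k" using mod_eq_dvd_iff_nat[of "dlog x" "k + dlog x" N] by simp
  also have "\<dots> \<longleftrightarrow> y / x \<in> Fq" using k alpha_power_mem_Fq_iff by simp
  also have "\<dots> \<longleftrightarrow> (\<exists>c \<in> Fq - {0}. y = c * x)"
    using assms by (auto intro: bexI[of _ "y / x"])
  finally show ?thesis .
qed

lemma ex_mult_alpha_power_point: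
  assumes "x \<noteq> 0"
  shows "\<exists>c \<in> Fq - {0}. x = c * \<alpha> ^ point x"
proof -
  have "point x = point (\<alpha> ^ point x)" using point_alpha_power point_less by simp
  then show ?thesis using point_eq_iff[OF _ assms, of "\<alpha> ^ point x"] alpha_nonzero by simp
qed

text \<open>Under rigid, every point met by S carries exactly card K - 1 nonzero vectors of S.\<close>

lemma card_nonzero_eq_mult_card_points:
  assumes K: "is_subfield K" "K \<subseteq> Fq" and S: "subspace_over K S"
    and rigid: "\<And>x c. x \<in> S - {0} \<Longrightarrow> c \<in> Fq \<Longrightarrow> c * x \<in> S \<Longrightarrow> c \<in> K"
  shows "card (S - {0}) = (card K - 1) * card (point ` (S - {0}))"
proof (rule card_eq_mult_card_image)
  fix x assume x: "x \<in> S - {0}"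
  have "{y \<in> S - {0}. point y = point x} = (\<lambda>c. c * x) ` (K - {0})"
  proof (intro equalityI subsetI)
    fix y assume "y \<in> {y \<in> S - {0}. point y = point x}"
    then obtain c where "c \<in> Fq - {0}" "y = c * x" "y \<in> S" using point_eq_iff x by blast
    then show "y \<in> (\<lambda>c. c * x) ` (K - {0})" using rigid[OF x] by blast
  next
    fix y assume "y \<in> (\<lambda>c. c * x) ` (K - {0})"
    then obtain c where c: "c \<in> K - {0}" "y = c * x" by blast
    then have "y \<in> S - {0}" using S x unfolding subspace_over_def by auto
    moreover have "point y = point x" using point_eq_iff x c K(2) \<open>y \<in> S - {0}\<close> by blast
    ultimately show "y \<in> {y \<in> S - {0}. point y = point x}" by blast
  qed
  moreover have "inj_on (\<lambda>c. c * x) (K - {0})" using x by (auto simp: inj_on_def)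
  moreover have "card (K - {0}) = card K - 1"
    using K(1) unfolding is_subfield_def by (simp add: card_Diff_singleton)
  ultimately show "card {y \<in> S - {0}. point y = point x} = card K - 1" by (simp add: card_image)
qed simp

text \<open>The points of the F_s-space baer i are the P_u with u mod m = i mod m; they form a Baer
  subplane.\<close>

definition baer :: "nat \<Rightarrow> 'a set" where "baer i = (\<lambda>e. \<alpha> ^ i * e) ` E"

lemma subspace_over_Fs_baer: "subspace_over Fs (baer i)"
  unfolding subspace_over_def baer_def
proof (intro conjI ballI)
  have "0 \<in> E" using is_subfield_E unfolding is_subfield_def by blast
  then show "0 \<in> (\<lambda>e. \<alpha> ^ i * e) ` E" by (intro image_eqI[of _ _ 0]) auto
next
  fix x y assume "x \<in> (\<lambda>e. \<alpha> ^ i * e) ` E" "y \<in> (\<lambda>e. \<alpha> ^ i * e) ` E"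
  then obtain e1 e2 where "e1 \<in> E" "e2 \<in> E" "x = \<alpha> ^ i * e1" "y = \<alpha> ^ i * e2" by blast
  moreover from calculation have "e1 + e2 \<in> E" using is_subfield_E unfolding is_subfield_def by blast
  ultimately show "x + y \<in> (\<lambda>e. \<alpha> ^ i * e) ` E"
    by (intro image_eqI[of _ _ "e1 + e2"]) (auto simp: algebra_simps)
next
  fix c x assume "c \<in> Fs" "x \<in> (\<lambda>e. \<alpha> ^ i * e) ` E"
  then obtain e where "e \<in> E" "x = \<alpha> ^ i * e" by blast
  moreover from calculation have "c * e \<in> E"
    using \<open>c \<in> Fs\<close> Fs_subset_E is_subfield_E unfolding is_subfield_def by blast
  ultimately show "c * x \<in> (\<lambda>e. \<alpha> ^ i * e) ` E"
    by (intro image_eqI[of _ _ "c * e"]) (auto simp: algebra_simps)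
qed

lemma card_baer: "card (baer i) = s^3"
proof -
  have "inj_on (\<lambda>e. \<alpha> ^ i * e) E" using alpha_nonzero by (auto simp: inj_on_def)
  then show ?thesis unfolding baer_def using card_E by (simp add: card_image)
qed

lemma point_mod_baer:
  assumes "x \<in> baer i - {0}"
  shows "point x mod m = i mod m"
proof -
  obtain e where e: "e \<in> E" "x = \<alpha> ^ i * e" using assms unfolding baer_def by blast
  then obtain k where k: "e = \<alpha> ^ k" using assms ex_alpha_power by auto
  then have "(s + 1) * m dvd k" using e(1) alpha_power_mem_E_iff s_cube_plus_one by simp
  then have "m dvd k" by (rule dvd_mult_right)
  have "point x = (i + k) mod N" using e k point_alpha_power[of "i + k"] by (simp add: power_add)
  then have "point x mod m = (i + k) mod m" using N_eq by (simp add: mod_mod_cancel)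
  also have "\<dots> = i mod m" using \<open>m dvd k\<close> by (auto elim!: dvdE)
  finally show ?thesis .
qed

text \<open>Since gcd M (s + 1) = 1, the gcd of N = m M and s^3 + 1 = (s + 1) m is m, so by Bezout
  alpha^m lies in the product of the groups generated by alpha^N (spanning F_q^*) and
  alpha^(s^3 + 1) (spanning E^*).\<close>

lemma alpha_power_m_eq_mult: "\<exists>c \<in> Fq - {0}. \<exists>e \<in> E - {0}. \<alpha> ^ m = c * e"
proof -
  have "M = s * (s + 1) + 1" unfolding M_def using q_square by (simp add: power2_eq_square)
  moreover have "gcd (s + 1) (s * (s + 1) + 1) = 1" by (simp only: gcd_add_mult) simp
  ultimately have coprime: "gcd M (s + 1) = 1" by (simp only: gcd.commute)
  have "M \<noteq> 0" unfolding M_def by simp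
  then obtain a b where "M * a = (s + 1) * b + gcd M (s + 1)"
    using bezout_nat[of M "s + 1"] by blast
  then have ab: "M * a = (s + 1) * b + 1" unfolding coprime .
  define c where "c = \<alpha> ^ (N * a)"
  define e where "e = inverse (\<alpha> ^ ((s^3 + 1) * b))"
  have "N * a = m * (M * a)" by (simp add: N_eq)
  also have "\<dots> = m * ((s + 1) * b + 1)" by (simp only: ab)
  also have "\<dots> = (s^3 + 1) * b + m" unfolding s_cube_plus_one by (simp add: algebra_simps)
  finally have "c = inverse e * \<alpha> ^ m" unfolding c_def e_def by (simp add: power_add)
  then have "\<alpha> ^ m = c * e" using alpha_nonzero unfolding e_def by (simp add: field_simps)
  moreover have "c \<in> Fq - {0}" unfolding c_def using alpha_power_mem_Fq_iff alpha_nonzero by simp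
  moreover have "\<alpha> ^ ((s^3 + 1) * b) \<in> E" by (simp only: alpha_power_mem_E_iff dvd_triv_left)
  then have "e \<in> E - {0}"
    unfolding e_def using is_subfield_E alpha_nonzero unfolding is_subfield_def by simp
  ultimately show ?thesis by blast
qed

lemma ex_baer_point:
  assumes "u < N"
  shows "\<exists>x \<in> baer (u mod m) - {0}. point x = u"
proof -
  obtain c e where c: "c \<in> Fq - {0}" and e: "e \<in> E - {0}" and ce: "\<alpha> ^ m = c * e"
    using alpha_power_m_eq_mult by blast
  define x where "x = \<alpha> ^ (u mod m) * e ^ (u div m)"
  have x: "x \<in> baer (u mod m) - {0}"
    unfolding x_def baer_def using subfield_q_power_closed e alpha_nonzero by auto
  have "\<alpha> ^ u = \<alpha> ^ (u mod m + m * (u div m))" by (simp only: mod_mult_div_eq)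
  also have "\<dots> = \<alpha> ^ (u mod m) * (c * e) ^ (u div m)" by (simp only: power_add power_mult ce)
  also have "\<dots> = c ^ (u div m) * x" unfolding x_def by (simp only: power_mult_distrib mult_ac)
  finally have "\<alpha> ^ u = c ^ (u div m) * x" .
  moreover have "c ^ (u div m) \<in> Fq - {0}" using c subfield_q_power_closed by auto
  moreover have "x \<noteq> 0" "\<alpha> ^ u \<noteq> 0" using x alpha_nonzero by auto
  ultimately have "point (\<alpha> ^ u) = point x" using point_eq_iff by blast
  then show ?thesis using x point_alpha_power assms by auto
qed

lemma mult_mem_baer_imp_mem_Fs:
  assumes "x \<in> baer i - {0}" "c \<in> Fq" "c * x \<in> baer i"
  shows "c \<in> Fs"
proof -
  obtain e e' where e: "e \<in> E" "e \<noteq> 0" "x = \<alpha> ^ i * e" and e': "e' \<in> E" "c * x = \<alpha> ^ i * e'"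
    using assms unfolding baer_def by auto
  then have "c = e' * inverse e" using alpha_nonzero by (simp add: field_simps)
  moreover have "e' * inverse e \<in> E" using e e' is_subfield_E unfolding is_subfield_def by blast
  ultimately show ?thesis using assms(2) Fq_Int_E by auto
qed

end

section \<open>A line fixed by tau\<close>

locale singer_square_line = singer_square +
  fixes W :: "'a set" and L :: "nat set"
  assumes W_subspace: "Fq_subspace q W" and card_W: "card W = q^2"
    and L_eq: "L = {u. u < q^2 + q + 1 \<and> \<alpha> ^ u \<in> W}"
    and tau_L: "tau_map p q ` L = L"
begin

lemma L_eq_N: "L = {u. u < N \<and> \<alpha> ^ u \<in> W}"
  using L_eq unfolding N_def .

lemma subspace_over_Fq_W: "subspace_over Fq W"
  using W_subspace by (simp add: Fq_subspace_iff_subspace_over)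

lemma mem_W_iff_point: "x \<noteq> 0 \<Longrightarrow> x \<in> W \<longleftrightarrow> point x \<in> L"
proof -
  assume "x \<noteq> 0"
  define a where "a = \<alpha> ^ point x"
  obtain c where c: "c \<in> Fq" "c \<noteq> 0" "x = c * a"
    using ex_mult_alpha_power_point[OF \<open>x \<noteq> 0\<close>] unfolding a_def by blast
  have "x \<in> W \<longleftrightarrow> a \<in> W"
  proof
    assume "x \<in> W"
    moreover have "inverse c \<in> Fq" using c(1) is_subfield_Fq unfolding is_subfield_def by blast
    ultimately have "inverse c * x \<in> W" using subspace_over_Fq_W unfolding subspace_over_def by blast
    then show "a \<in> W" using c(2,3) by (simp add: field_simps)
  next
    assume "a \<in> W"
    then show "x \<in> W" using c subspace_over_Fq_W unfolding subspace_over_def by simp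
  qed
  then show ?thesis using point_less unfolding L_eq_N a_def by simp
qed

lemma point_image_W: "point ` (W - {0}) = L"
proof (intro equalityI subsetI)
  fix u assume "u \<in> L"
  then have "\<alpha> ^ u \<in> W - {0}" "point (\<alpha> ^ u) = u"
    using alpha_nonzero point_alpha_power unfolding L_eq_N by auto
  then show "u \<in> point ` (W - {0})" by force
qed (use mem_W_iff_point in auto)

lemma card_L: "card L = q + 1"
proof -
  have "card (W - {0}) = (q - 1) * card L"
    using card_nonzero_eq_mult_card_points[OF is_subfield_Fq order.refl subspace_over_Fq_W]
    by (simp add: card_Fq point_image_W)
  moreover have "card (W - {0}) = (q - 1) * (q + 1)"
    using card_W subspace_over_Fq_W unfolding subspace_over_def
    by (simp add: card_Diff_singleton power2_eq_square algebra_simps)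
  ultimately have "(q - 1) * card L = (q - 1) * (q + 1)" by simp
  moreover have "q - 1 \<noteq> 0" using q_ge_2 by simp
  ultimately show ?thesis using mult_left_cancel by blast
qed

lemma subspace_over_Fs_W_Int_baer: "subspace_over Fs (W \<inter> baer i)"
  using subspace_over_Int subspace_over_subset[OF Fs_subset_Fq subspace_over_Fq_W]
    subspace_over_Fs_baer by blast

lemma point_image_W_Int_baer:
  assumes "i < m"
  shows "point ` (W \<inter> baer i - {0}) = L \<inter> orbit_class q m i"
proof (intro equalityI subsetI)
  fix u assume "u \<in> point ` (W \<inter> baer i - {0})"
  then obtain x where "x \<in> W" "x \<in> baer i - {0}" "u = point x" by blast
  then show "u \<in> L \<inter> orbit_class q m i"
    using mem_W_iff_point point_mod_baer point_less assms
    unfolding orbit_class_def N_def[symmetric] by auto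
next
  fix u assume "u \<in> L \<inter> orbit_class q m i"
  then have u: "u \<in> L" "u < N" "u mod m = i" unfolding orbit_class_def N_def by auto
  then obtain x where "x \<in> baer i - {0}" "point x = u" using ex_baer_point by blast
  with u(1) show "u \<in> point ` (W \<inter> baer i - {0})" using mem_W_iff_point by blast
qed

lemma card_W_Int_baer:
  assumes "i < m"
  shows "card (W \<inter> baer i - {0}) = (s - 1) * wcount q m L i"
  using card_nonzero_eq_mult_card_points[OF is_subfield_Fs Fs_subset_Fq subspace_over_Fs_W_Int_baer]
    mult_mem_baer_imp_mem_Fs
  unfolding wcount_def point_image_W_Int_baer[OF assms, symmetric] card_Fs by blast

lemma W_Int_baer_nontrivial: "W \<inter> baer i \<noteq> {0}"
proof
  assume "W \<inter> baer i = {0}"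
  moreover have "\<forall>x\<in>W. \<forall>y\<in>W. x - y \<in> W"
    using subspace_over_diff[OF is_subfield_Fq subspace_over_Fq_W] by blast
  moreover have "\<forall>x\<in>baer i. \<forall>y\<in>baer i. x - y \<in> baer i"
    using subspace_over_diff[OF is_subfield_Fs subspace_over_Fs_baer] by blast
  ultimately have "card W * card (baer i) \<le> card (UNIV :: 'a set)"
    by (intro card_mult_card_le_if_Int_eq_zero)
  \<comment> \<open>the F_s-dimensions 4 of W and 3 of baer i exceed the dimension 6 of the field\<close>
  then have "s^7 \<le> s^6" using card_W card_baer card_field q_square by (simp flip: power_mult power_add)
  moreover have "s^6 < s^7" using s_ge_2 by (intro power_strict_increasing) auto
  ultimately show False by simp
qed

lemma wcount_baer_cases:
  assumes "i < m"
  shows "wcount q m L i = 1 \<or> wcount q m L i = s + 1"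
proof -
  let ?w = "wcount q m L i"
  obtain j where j: "card (W \<inter> baer i) = s ^ j"
    using card_subspace_over[OF is_subfield_Fs subspace_over_Fs_W_Int_baer finite] card_Fs by metis
  have "0 \<in> W \<inter> baer i" using subspace_over_Fs_W_Int_baer unfolding subspace_over_def by blast
  then have w: "(s - 1) * ?w = s ^ j - 1"
    using j card_W_Int_baer[OF assms] by (simp add: card_Diff_singleton)
  have "j \<noteq> 0"
  proof
    assume "j = 0"
    then have "card (W \<inter> baer i) = 1" using j by simp
    then show False using W_Int_baer_nontrivial \<open>0 \<in> W \<inter> baer i\<close> by (metis card_1_singletonE singletonD)
  qed
  moreover have "j < 3"
  proof (rule ccontr)
    assume "\<not> j < 3"
    then have "s^3 \<le> s ^ j" using s_ge_2 by (intro power_increasing) auto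
    then have "s^3 - 1 \<le> s ^ j - 1" by (rule diff_le_mono)
    then have "(s - 1) * M \<le> (s - 1) * ?w" unfolding w s_cube_minus_one .
    then have "M \<le> ?w" using s_ge_2 by simp
    moreover have "?w \<le> card L"
      unfolding wcount_def using card_L by (intro card_mono) (auto simp: L_eq_N)
    ultimately show False using card_L s_ge_2 unfolding M_def by simp
  qed
  ultimately have "j = 1 \<or> j = 2" by auto
  then have "(s - 1) * ?w = (s - 1) * 1 \<or> (s - 1) * ?w = (s - 1) * (s + 1)"
    using w q_minus_one q_square by auto
  moreover have "s - 1 \<noteq> 0" using s_ge_2 by simp
  ultimately show ?thesis using mult_left_cancel by blast
qed

lemma sum_wcount_baer: "(\<Sum>i<m. wcount q m L i) = q + 1"
proof -
  have "wcount q 1 L 0 = card L"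
    unfolding wcount_def orbit_class_def using L_eq by (intro arg_cong[of _ _ card]) auto
  moreover have "{i. i < m \<and> i mod 1 = 0} = {..<m}" by auto
  ultimately show ?thesis using wcount_eq_sum_wcount[OF m_pos, of 1] card_L by simp
qed

lemma card_rich_baer_classes: "card {i. i < m \<and> wcount q m L i = s + 1} = 1"
proof -
  let ?R = "{i. i < m \<and> wcount q m L i = s + 1}"
  have "(\<Sum>i<m. wcount q m L i) = (\<Sum>i<m. 1 + (if wcount q m L i = s + 1 then s else 0))"
    using wcount_baer_cases by (intro sum.cong) auto
  also have "\<dots> = m + (\<Sum>i<m. if wcount q m L i = s + 1 then s else 0)"
    by (subst sum.distrib) simp
  also have "(\<Sum>i<m. if wcount q m L i = s + 1 then s else 0) = (\<Sum>i\<in>?R. s)"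
    by (subst sum.inter_filter[symmetric]) (auto intro: sum.cong)
  finally have "q + 1 = m + s * card ?R" using sum_wcount_baer by simp
  then have "s * card ?R = s * 1" using m_plus_s by linarith
  then show ?thesis using s_ge_2 by auto
qed

lemma coprime_p_N: "coprime p N"
proof (rule prime_imp_coprime[OF prime_p])
  have "p dvd q" using q_eq h_pos by (simp add: dvd_power)
  then have "p dvd q^2 + q" by (simp add: power2_eq_square)
  then have "p dvd N \<longleftrightarrow> p dvd 1" unfolding N_def by (rule dvd_add_right_iff)
  then show "\<not> p dvd N" using prime_gt_1_nat[OF prime_p] by simp
qed

lemma coprime_m_p_minus_1: "coprime m (p - 1)"
proof -
  have "[p = 1] (mod p - 1)" using prime_gt_0_nat[OF prime_p] by (simp add: cong_altdef_nat)
  then have pow: "[p ^ k = 1] (mod p - 1)" for k using cong_pow[of p 1 "p - 1" k] by simp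
  obtain k where "s = p ^ k" using s_prime_power CHAR_eq by blast
  then have "[1 = s] (mod p - 1)" using pow cong_sym by blast
  moreover have "[q = 1] (mod p - 1)" using pow q_eq by simp
  ultimately have "[q + 1 = 1 + s] (mod p - 1)" by (intro cong_add) simp_all
  then have "[m + s = 1 + s] (mod p - 1)" using m_plus_s by simp
  then have "[m = 1] (mod p - 1)" by (simp only: cong_add_rcancel_nat)
  then have "gcd m (p - 1) = gcd 1 (p - 1)" by (rule cong_gcd_eq)
  then show ?thesis unfolding coprime_iff_gcd_eq_1 by simp
qed

lemma wcount_baer_le_wcount_baer_mult_p:
  assumes "i < m"
  shows "wcount q m L i \<le> wcount q m L (i * p mod m)"
  unfolding wcount_def
proof (rule card_inj_on_le)
  show "inj_on (tau_map p q) (L \<inter> orbit_class q m i)"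
  proof (rule inj_onI)
    fix u u' assume "u \<in> L \<inter> orbit_class q m i" "u' \<in> L \<inter> orbit_class q m i"
      and "tau_map p q u = tau_map p q u'"
    then have "[u * p = u' * p] (mod N)" "u < N" "u' < N"
      unfolding tau_map_def orbit_class_def cong_def N_def by auto
    then show "u = u'" using coprime_p_N cong_mult_rcancel_nat unfolding cong_def
      by (metis coprime_commute mod_less)
  qed
  show "tau_map p q ` (L \<inter> orbit_class q m i) \<subseteq> L \<inter> orbit_class q m (i * p mod m)"
  proof
    fix x assume "x \<in> tau_map p q ` (L \<inter> orbit_class q m i)"
    then obtain u where u: "u \<in> L" "u mod m = i" "x = u * p mod N"
      unfolding orbit_class_def tau_map_def N_def by auto
    have "x mod m = u * p mod m" unfolding u(3) N_eq by (simp add: mod_mod_cancel)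
    then have "x mod m = i * p mod m" using u(2) mod_mult_left_eq[of u m p] by simp
    moreover have "x \<in> L" using u tau_L unfolding tau_map_def N_def by auto
    moreover have "x < N" using N_pos u(3) by simp
    ultimately show "x \<in> L \<inter> orbit_class q m (i * p mod m)"
      unfolding orbit_class_def N_def by simp
  qed
qed (simp add: orbit_class_def)

lemma wcount_baer_values:
  shows "wcount q m L 0 = s + 1" and "0 < i \<Longrightarrow> i < m \<Longrightarrow> wcount q m L i = 1"
proof -
  obtain i0 where R: "{i. i < m \<and> wcount q m L i = s + 1} = {i0}"
    using card_rich_baer_classes by (rule card_1_singletonE)
  then have i0: "i0 < m" "wcount q m L i0 = s + 1" by auto
  have "i0 * p mod m < m" using m_pos by simp
  moreover have "wcount q m L (i0 * p mod m) \<ge> s + 1"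
    using wcount_baer_le_wcount_baer_mult_p[OF i0(1)] i0(2) by simp
  ultimately have "wcount q m L (i0 * p mod m) = s + 1"
    using wcount_baer_cases[of "i0 * p mod m"] s_ge_2 by auto
  with \<open>i0 * p mod m < m\<close> have "i0 * p mod m \<in> {i. i < m \<and> wcount q m L i = s + 1}" by simp
  then have "i0 * p mod m \<in> {i0}" unfolding R .
  then have "i0 * p mod m = i0 mod m" using i0(1) by simp
  moreover have "i0 \<le> i0 * p" using prime_gt_0_nat[OF prime_p] by simp
  ultimately have "m dvd i0 * p - i0" by (simp add: mod_eq_dvd_iff_nat)
  then have "m dvd i0 * (p - 1)" by (simp add: diff_mult_distrib2)
  then have "m dvd i0" using coprime_m_p_minus_1 by (simp add: coprime_dvd_mult_left_iff)
  then have "i0 = 0" using i0(1) by (cases "i0 = 0") (auto dest: dvd_imp_le)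
  then show "wcount q m L 0 = s + 1" using i0 by simp
  show "wcount q m L i = 1" if "0 < i" "i < m"
  proof -
    have "i \<notin> {i. i < m \<and> wcount q m L i = s + 1}" using R that(1) \<open>i0 = 0\<close> by simp
    then show ?thesis using wcount_baer_cases[OF that(2)] that(2) by auto
  qed
qed

lemma wcount_of_divisor:
  assumes "m = v * t"
  shows "wcount q t L 0 = s + v" and "1 \<le> u \<Longrightarrow> u < t \<Longrightarrow> wcount q t L u = v"
proof -
  have "0 < t" "0 < v" using assms m_pos by auto
  have sum: "wcount q t L u = (\<Sum>i \<in> {i. i < v * t \<and> i mod t = u}. wcount q m L i)" for u
    using wcount_eq_sum_wcount[OF m_pos, of t] assms by simp
  let ?I = "{i. i < v * t \<and> i mod t = 0}"
  have "0 \<in> ?I" using \<open>0 < t\<close> \<open>0 < v\<close> by simp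
  have "wcount q t L 0 = wcount q m L 0 + (\<Sum>i \<in> ?I - {0}. wcount q m L i)"
    unfolding sum by (rule sum.remove) (use \<open>0 \<in> ?I\<close> in auto)
  also have "(\<Sum>i \<in> ?I - {0}. wcount q m L i) = (\<Sum>i \<in> ?I - {0}. 1)"
    using wcount_baer_values(2) assms by (intro sum.cong) auto
  also have "\<dots> = v - 1"
    using card_residue_class[OF \<open>0 < t\<close>, of v] \<open>0 \<in> ?I\<close> by (simp add: card_Diff_singleton)
  finally show "wcount q t L 0 = s + v" using wcount_baer_values(1) \<open>0 < v\<close> by simp
  assume u: "1 \<le> u" "u < t"
  have "0 < i" if "i mod t = u" for i using that u(1) by (cases "i = 0") auto
  then have "wcount q t L u = (\<Sum>i \<in> {i. i < v * t \<and> i mod t = u}. 1)"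
    unfolding sum using wcount_baer_values(2) assms by (intro sum.cong) auto
  then show "wcount q t L u = v" using card_residue_class[OF u(2)] by simp
qed

end

theorem proposition7:
  fixes \<alpha> :: "'a::{field,finite}" and p h q s v t :: nat and L :: "nat set"
  assumes "prime p" and "h \<ge> 1" and "q = p ^ h"
    and "card (UNIV :: 'a set) = q ^ 3"
    and "primitive_elem \<alpha>"
    and "pg_line q \<alpha> L"
    and "tau_map p q ` L = L"
    and "q = s ^ 2"
    and "v \<ge> 1"
    and "v * (q + s + 1) dvd q^2 + q + 1"
    and "t = (q^2 + q + 1) div (v * (q + s + 1))"
  shows "real t = (real q - real s + 1) / real v
         \<and> wcount q t L 0 = s + v
         \<and> (\<forall>u. 1 \<le> u \<and> u < t \<longrightarrow> wcount q t L u = v)"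
proof -
  obtain W where "Fq_subspace q W" "card W = q^2" "L = {u. u < q^2 + q + 1 \<and> \<alpha> ^ u \<in> W}"
    using assms(6) unfolding pg_line_def by blast
  then interpret singer_square_line \<alpha> p h s q W L
    using assms by unfold_locales (simp_all add: primitive_field_def)
  have "v * M dvd m * M" "t = m * M div (v * M)"
    using assms(10,11) unfolding M_def[symmetric] N_def[symmetric] N_eq .
  moreover have "M \<noteq> 0" unfolding M_def by simp
  ultimately have mvt: "m = v * t" by simp
  have "real m = real q - real s + 1"
    unfolding m_def using assms(8) by (simp add: of_nat_diff power2_eq_square le_square)
  then have "real t = (real q - real s + 1) / real v"
    using mvt assms(9) by (simp add: field_simps)
  then show ?thesis using wcount_of_divisor[OF mvt] by blast
qed

end
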